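(* $z^\star_{\omega,\tau}(t)\ge\frac{\tau}{L_\omega}\mathbf{1}$ (componentwise) for almost every $t\in\Omega$.
   Context: Let $\Omega=(t_0,t_E)$ bounded, $t_1,\dots,t_M\in[t_0,t_E]$; $\mathcal{X}=(H^1(\Omega))^{n_y}\times(L^2(\Omega))^{n_z}$, $x=(y,z)$. For $f:\mathbb{R}^{n_y}\times\mathbb{R}^{n_y}\times\mathbb{R}^{n_z}\times\Omega\to\mathbb{R}$, $c$ (values in $\mathbb{R}^{n_c}$), $b:(\mathbb{R}^{n_y})^M\to\mathbb{R}^{n_b}$: $F(x)=\int_\Omega f(\dot y,y,z,t)dt$, $r(x)=\int_\Omega\|c(\dot y,y,z,t)\|_2^2dt+\|b(y(t_1),\dots,y(t_M))\|_2^2$, $\Gamma(x)=-\sum_{j=1}^{n_z}\int_\Omega\log z_j(t)dt$. For $\omega\in(0,1)$, $\tau\in(0,\omega]$: $F_{\omega,\tau}=F+\frac1{2\omega}r+\tau\Gamma$, and $x^\star_{\omega,\tau}=(y^\star_{\omega,\tau},z^\star_{\omega,\tau})$ is a minimizer of $F_{\omega,\tau}$ over $\mathcal{X}$. Assumptions: (A.2) $\|c(\dot y(t),y(t),z(t),t)\|_1$ and $\|b(\dots)\|_1$ bounded for all $x$ with $z\ge0$, $t\in\Omega$; $F$ bounded below on $\{z\ge0\}$. (A.3) $f,c,b$ globally Lipschitz in all arguments except $t$. $L_F,L_r\ge2$ bound the Lipschitz constants of $F,r$ (w.r.t. $\|x\|_{\mathcal{X}}$ and $\|z\|_{L^1(\Omega)}$),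 $L_f,L_c$ are the Lipschitz constants of $f,c$, $|c|_{max}$ bounds $\|c\|_1$, and $L_\omega=\max\{L_F+\frac{L_r}{2\omega},L_f+\frac{L_c}{2\omega}|c|_{max}\}$. *)

theory Defs
  imports "HOL-Analysis.Analysis"
begin

definition Om :: "real \<Rightarrow> real \<Rightarrow> real set" where
  "Om t0 tE = {t0<..<tE}"

definition L2fun :: "real \<Rightarrow> real \<Rightarrow> (real \<Rightarrow> 'a::euclidean_space) \<Rightarrow> bool" where
  "L2fun t0 tE g \<longleftrightarrow> g \<in> borel_measurable (lebesgue_on (Om t0 tE))
      \<and> integrable (lebesgue_on (Om t0 tE)) (\<lambda>t. (norm (g t))^2)"

text \<open>H1 functions on a bounded interval, represented by their (absolutely) continuous
  representative on the closed interval: y is the indefinite integral of an L2 function.\<close>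
definition H1fun :: "real \<Rightarrow> real \<Rightarrow> (real \<Rightarrow> 'a::euclidean_space) \<Rightarrow> bool" where
  "H1fun t0 tE y \<longleftrightarrow> (\<exists>v. L2fun t0 tE v \<and>
      (\<forall>t\<in>{t0..tE}. y t = y t0 + (LINT s:{t0..t}|lborel. v s)))"

definition Xspace :: "real \<Rightarrow> real \<Rightarrow>
    ((real \<Rightarrow> real^'ny) \<times> (real \<Rightarrow> real^'nz)) set" where
  "Xspace t0 tE = {(y, z). H1fun t0 tE y \<and> L2fun t0 tE z}"

text \<open>Derivative of y (coincides a.e. with the weak derivative for H1 functions).\<close>
definition dy :: "(real \<Rightarrow> 'a::real_normed_vector) \<Rightarrow> real \<Rightarrow> 'a" where
  "dy y t = vector_derivative y (at t)"

definition norm1 :: "real^'n \<Rightarrow> real" where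
  "norm1 v = (\<Sum>i\<in>UNIV. \<bar>v $ i\<bar>)"

definition Xnorm :: "real \<Rightarrow> real \<Rightarrow> (real \<Rightarrow> real^'ny) \<Rightarrow> (real \<Rightarrow> real^'nz) \<Rightarrow> real" where
  "Xnorm t0 tE y z = sqrt (\<integral>t. (norm (y t))^2 + (norm (dy y t))^2 + (norm (z t))^2
                              \<partial>lebesgue_on (Om t0 tE))"

definition L1norm :: "real \<Rightarrow> real \<Rightarrow> (real \<Rightarrow> real^'nz) \<Rightarrow> real" where
  "L1norm t0 tE z = (\<integral>t. norm1 (z t) \<partial>lebesgue_on (Om t0 tE))"

definition znonneg :: "real \<Rightarrow> real \<Rightarrow> (real \<Rightarrow> real^'nz) \<Rightarrow> bool" where
  "znonneg t0 tE z \<longleftrightarrow> (AE t in lebesgue_on (Om t0 tE). \<forall>j. 0 \<le> z t $ j)"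

definition Fobj :: "(real^'ny \<Rightarrow> real^'ny \<Rightarrow> real^'nz \<Rightarrow> real \<Rightarrow> real) \<Rightarrow> real \<Rightarrow> real \<Rightarrow>
    (real \<Rightarrow> real^'ny) \<Rightarrow> (real \<Rightarrow> real^'nz) \<Rightarrow> real" where
  "Fobj f t0 tE y z = (\<integral>t. f (dy y t) (y t) (z t) t \<partial>lebesgue_on (Om t0 tE))"

definition robj :: "(real^'ny \<Rightarrow> real^'ny \<Rightarrow> real^'nz \<Rightarrow> real \<Rightarrow> real^'nc) \<Rightarrow>
    (real^'ny^'m \<Rightarrow> real^'nb) \<Rightarrow> ('m \<Rightarrow> real) \<Rightarrow> real \<Rightarrow> real \<Rightarrow>
    (real \<Rightarrow> real^'ny) \<Rightarrow> (real \<Rightarrow> real^'nz) \<Rightarrow> real" where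
  "robj c b ts t0 tE y z =
     (\<integral>t. (norm (c (dy y t) (y t) (z t) t))^2 \<partial>lebesgue_on (Om t0 tE))
     + (norm (b (\<chi> k. y (ts k))))^2"

definition neglog :: "real \<Rightarrow> ennreal" where
  "neglog s = (if 0 < s then ennreal (max 0 (- ln s)) else \<infinity>)"

definition poslog :: "real \<Rightarrow> ennreal" where
  "poslog s = (if 0 < s then ennreal (max 0 (ln s)) else 0)"

text \<open>Log barrier Gamma(x) = - sum_j integral log z_j, with value +infinity when some z_j
  is not a.e. positive or -log z_j is not integrable.\<close>
definition Gamma :: "real \<Rightarrow> real \<Rightarrow> (real \<Rightarrow> real^'nz) \<Rightarrow> ereal" where
  "Gamma t0 tE z = (\<Sum>j\<in>UNIV.
      enn2ereal (\<integral>\<^sup>+ t. neglog (z t $ j) \<partial>lebesgue_on (Om t0 tE))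
    - enn2ereal (\<integral>\<^sup>+ t. poslog (z t $ j) \<partial>lebesgue_on (Om t0 tE)))"

definition Fwt :: "(real^'ny \<Rightarrow> real^'ny \<Rightarrow> real^'nz \<Rightarrow> real \<Rightarrow> real) \<Rightarrow>
    (real^'ny \<Rightarrow> real^'ny \<Rightarrow> real^'nz \<Rightarrow> real \<Rightarrow> real^'nc) \<Rightarrow>
    (real^'ny^'m \<Rightarrow> real^'nb) \<Rightarrow> ('m \<Rightarrow> real) \<Rightarrow> real \<Rightarrow> real \<Rightarrow> real \<Rightarrow> real \<Rightarrow>
    (real \<Rightarrow> real^'ny) \<Rightarrow> (real \<Rightarrow> real^'nz) \<Rightarrow> ereal" where
  "Fwt f c b ts t0 tE \<omega> \<tau> y z =
     ereal (Fobj f t0 tE y z + robj c b ts t0 tE y z / (2 * \<omega>)) + ereal \<tau> * Gamma t0 tE z"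

end

theory Submission
  imports Defs
begin

text \<open>Let \<open>L = L\<^sub>F + L\<^sub>r/(2\<omega>) \<le> L\<^sub>\<omega>\<close> and \<open>d = \<tau>/L\<close>. Raising every component of
  \<open>z\<^sup>\<star>\<close> to at least \<open>d\<close> changes \<open>F + r/(2\<omega>)\<close> by at most \<open>L\<close> times the \<open>L\<^sup>1\<close>-size \<open>\<integral>(d - z\<^sup>\<star>)\<^sup>+\<close>
  of the change, while the barrier \<open>\<tau>\<Gamma>\<close> drops by \<open>\<tau>\<integral>(ln d - ln z\<^sup>\<star>)\<^sup>+\<close>. Since
  \<open>ln d - ln s > (d - s)/d\<close> for \<open>0 < s < d\<close> (strict concavity of \<open>ln\<close>), minimality of \<open>z\<^sup>\<star>\<close> forces
  the set \<open>{z\<^sup>\<star> < d}\<close> to be null.\<close>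

lemma ln_diff_gt_relative_gap:
  fixes s d :: real
  assumes "0 < s" "s < d"
  shows "(d - s) / d < ln d - ln s"
proof -
  define x where "x = s / d"
  have "0 < x" "x \<noteq> 1" using assms by (auto simp: x_def)
  then have "ln x < x - 1"
    using ln_le_minus_one ln_eq_minus_one by force
  moreover have "ln x = ln s - ln d" using assms by (simp add: x_def ln_div)
  moreover have "x - 1 = - ((d - s) / d)" using assms by (simp add: x_def field_simps)
  ultimately show ?thesis by simp
qed

lemma ln_max_gap_nonneg:
  fixes s d :: real
  assumes "0 < s" "0 < d"
  shows "0 \<le> ln (max s d) - ln s - max 0 (d - s) / d"
  using ln_diff_gt_relative_gap[OF assms(1), of d] by (cases "d \<le> s") (auto simp: max_def)

lemma ln_max_gap_eq_0_imp_ge: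
  fixes s d :: real
  assumes "0 < s" "ln (max s d) - ln s - max 0 (d - s) / d = 0"
  shows "d \<le> s"
  using ln_diff_gt_relative_gap[OF assms(1), of d] assms(2) by (cases "d \<le> s") (auto simp: max_def)

lemma AE_ge_of_ln_max_gap_integral_le_0:
  fixes g :: "'i \<Rightarrow> 'a \<Rightarrow> real" and d :: real
  defines "gap \<equiv> \<lambda>i x. ln (max (g i x) d) - ln (g i x) - max 0 (d - g i x) / d"
  assumes "finite I" "0 < d" "j \<in> I"
    and pos: "\<And>i. i \<in> I \<Longrightarrow> AE x in M. 0 < g i x"
    and int: "\<And>i. i \<in> I \<Longrightarrow> integrable M (gap i)"
    and le: "(\<Sum>i\<in>I. \<integral>x. gap i x \<partial>M) \<le> 0"
  shows "AE x in M. d \<le> g j x"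
proof -
  have gap_nonneg: "AE x in M. 0 \<le> gap i x" if "i \<in> I" for i
    using pos[OF that] by eventually_elim (unfold gap_def, rule ln_max_gap_nonneg[OF _ \<open>0 < d\<close>])
  then have int_nonneg: "0 \<le> (\<integral>x. gap i x \<partial>M)" if "i \<in> I" for i
    using that by (simp add: integral_nonneg_AE)
  with le have "(\<Sum>i\<in>I. \<integral>x. gap i x \<partial>M) = 0"
    by (simp add: antisym sum_nonneg)
  then have "(\<integral>x. gap j x \<partial>M) = 0"
    using sum_nonneg_eq_0_iff[OF \<open>finite I\<close> int_nonneg] \<open>j \<in> I\<close> by simp
  then have "AE x in M. gap j x = 0"
    using integral_nonneg_eq_0_iff_AE[OF int[OF \<open>j \<in> I\<close>] gap_nonneg[OF \<open>j \<in> I\<close>]] by simp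
  with pos[OF \<open>j \<in> I\<close>] show ?thesis
    by eventually_elim (unfold gap_def, rule ln_max_gap_eq_0_imp_ge)
qed

lemma neglog_measurable [measurable]: "neglog \<in> borel_measurable borel"
  unfolding neglog_def by measurable

lemma poslog_le_abs: "poslog s \<le> ennreal \<bar>s\<bar>"
  using ln_bound[of s] by (auto simp: poslog_def intro!: ennreal_leI)

lemma
  fixes g :: "'a \<Rightarrow> real"
  assumes "AE x in M. 0 < g x"
  shows nn_integral_neglog_eq: "(\<integral>\<^sup>+x. neglog (g x) \<partial>M) = (\<integral>\<^sup>+x. ennreal (- ln (g x)) \<partial>M)"
    and nn_integral_poslog_eq: "(\<integral>\<^sup>+x. poslog (g x) \<partial>M) = (\<integral>\<^sup>+x. ennreal (ln (g x)) \<partial>M)"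
  by (auto intro!: nn_integral_cong_AE eventually_mono[OF assms]
      simp: neglog_def poslog_def max_def ennreal_neg)

lemma AE_pos_of_nn_integral_neglog_finite:
  fixes g :: "'a \<Rightarrow> real"
  assumes "g \<in> borel_measurable M" "(\<integral>\<^sup>+x. neglog (g x) \<partial>M) \<noteq> \<infinity>"
  shows "AE x in M. 0 < g x"
proof -
  have "AE x in M. neglog (g x) \<noteq> \<infinity>"
    using assms by (intro nn_integral_PInf_AE) auto
  then show ?thesis
    by eventually_elim (auto simp: neglog_def split: if_splits)
qed

lemma integrable_ln_iff_nn_integral_neglog_poslog_finite:
  fixes g :: "'a \<Rightarrow> real"
  assumes "g \<in> borel_measurable M" "AE x in M. 0 < g x"
  shows "integrable M (\<lambda>x. ln (g x)) \<longleftrightarrow>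
    (\<integral>\<^sup>+x. neglog (g x) \<partial>M) \<noteq> \<infinity> \<and> (\<integral>\<^sup>+x. poslog (g x) \<partial>M) \<noteq> \<infinity>"
  using assms by (auto simp: real_integrable_def nn_integral_neglog_eq nn_integral_poslog_eq)

lemma neglog_minus_poslog_integral_eq:
  fixes g :: "'a \<Rightarrow> real"
  assumes "AE x in M. 0 < g x" "integrable M (\<lambda>x. ln (g x))"
  shows "enn2ereal (\<integral>\<^sup>+x. neglog (g x) \<partial>M) - enn2ereal (\<integral>\<^sup>+x. poslog (g x) \<partial>M)
    = ereal (- (\<integral>x. ln (g x) \<partial>M))"
proof -
  obtain r q where "0 \<le> r" "0 \<le> q"
    "(\<integral>\<^sup>+x. ennreal (ln (g x)) \<partial>M) = ennreal r"
    "(\<integral>\<^sup>+x. ennreal (- ln (g x)) \<partial>M) = ennreal q"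
    "(\<integral>x. ln (g x) \<partial>M) = r - q"
    using assms(2) by (rule integrableE)
  then show ?thesis
    using assms(1) by (simp add: nn_integral_neglog_eq nn_integral_poslog_eq)
qed

lemma finite_measure_Om: "finite_measure (lebesgue_on (Om t0 tE))"
  unfolding Om_def by (intro finite_measure_lebesgue_on lmeasurable_open) auto

lemma L2fun_component_measurable:
  fixes z :: "real \<Rightarrow> real^'n"
  assumes "L2fun t0 tE z"
  shows "(\<lambda>t. z t $ j) \<in> borel_measurable (lebesgue_on (Om t0 tE))"
  using assms unfolding L2fun_def by (auto intro: measurable_compose[OF _ borel_measurable_nth])

lemma L2fun_component_integrable:
  fixes z :: "real \<Rightarrow> real^'n"
  assumes "L2fun t0 tE z"
  shows "integrable (lebesgue_on (Om t0 tE)) (\<lambda>t. z t $ j)"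
proof -
  interpret finite_measure "lebesgue_on (Om t0 tE)" by (rule finite_measure_Om)
  note meas = L2fun_component_measurable[OF assms]
  have "norm ((z t $ j)\<^sup>2) \<le> norm ((norm (z t))\<^sup>2)" for t
    using power_mono[OF component_le_norm_cart[of "z t" j], of 2] by simp
  moreover have "integrable (lebesgue_on (Om t0 tE)) (\<lambda>t. (norm (z t))\<^sup>2)"
    using assms by (simp add: L2fun_def)
  ultimately have "integrable (lebesgue_on (Om t0 tE)) (\<lambda>t. (z t $ j)\<^sup>2)"
    using borel_measurable_power[OF meas] by (blast intro: Bochner_Integration.integrable_bound)
  then show ?thesis
    by (rule square_integrable_imp_integrable[OF meas])
qed

lemma nn_integral_poslog_L2fun_finite:
  fixes z :: "real \<Rightarrow> real^'n"
  assumes "L2fun t0 tE z"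
  shows "(\<integral>\<^sup>+t. poslog (z t $ j) \<partial>lebesgue_on (Om t0 tE)) \<noteq> \<infinity>"
proof -
  have "(\<integral>\<^sup>+t. poslog (z t $ j) \<partial>lebesgue_on (Om t0 tE))
      \<le> (\<integral>\<^sup>+t. ennreal (norm (z t $ j)) \<partial>lebesgue_on (Om t0 tE))"
    by (intro nn_integral_mono) (simp add: poslog_le_abs)
  also have "\<dots> < \<infinity>"
    using L2fun_component_integrable[OF assms] by (simp add: integrable_iff_bounded)
  finally show ?thesis by simp
qed

lemma Gamma_eq_sum_integral_ln:
  fixes z :: "real \<Rightarrow> real^'n"
  assumes "\<And>j. AE t in lebesgue_on (Om t0 tE). 0 < z t $ j"
    and "\<And>j. integrable (lebesgue_on (Om t0 tE)) (\<lambda>t. ln (z t $ j))"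
  shows "Gamma t0 tE z = ereal (- (\<Sum>j\<in>UNIV. \<integral>t. ln (z t $ j) \<partial>lebesgue_on (Om t0 tE)))"
  unfolding Gamma_def by (simp add: neglog_minus_poslog_integral_eq[OF assms] sum_negf)

lemma Gamma_finite_imp_ln_integrable:
  fixes z :: "real \<Rightarrow> real^'n"
  assumes "L2fun t0 tE z" "Gamma t0 tE z \<noteq> \<infinity>"
  shows "AE t in lebesgue_on (Om t0 tE). 0 < z t $ j"
    and "integrable (lebesgue_on (Om t0 tE)) (\<lambda>t. ln (z t $ j))"
proof -
  let ?M = "lebesgue_on (Om t0 tE)"
  note meas = L2fun_component_measurable[OF assms(1)]
  note poslog_finite = nn_integral_poslog_L2fun_finite[OF assms(1)]
  have neglog_finite: "(\<integral>\<^sup>+t. neglog (z t $ i) \<partial>?M) \<noteq> \<infinity>" for i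
  proof
    assume "(\<integral>\<^sup>+t. neglog (z t $ i) \<partial>?M) = \<infinity>"
    then have "Gamma t0 tE z = \<infinity>"
      using poslog_finite[of i] unfolding Gamma_def sum_Pinfty
      by (intro conjI bexI[of _ i]) (auto simp: less_top)
    with assms(2) show False ..
  qed
  show pos: "AE t in ?M. 0 < z t $ j"
    by (rule AE_pos_of_nn_integral_neglog_finite[OF meas neglog_finite])
  show "integrable ?M (\<lambda>t. ln (z t $ j))"
    using integrable_ln_iff_nn_integral_neglog_poslog_finite[OF meas pos]
      neglog_finite poslog_finite by blast
qed

definition trunc_below :: "real \<Rightarrow> (real \<Rightarrow> real^'n) \<Rightarrow> real \<Rightarrow> real^'n" where
  "trunc_below d z t = (\<chi> j. max (z t $ j) d)"

lemma norm_sq_vec_max_le: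
  fixes v :: "real^'n" and d :: real
  assumes "0 \<le> d"
  shows "(norm (\<chi> j. max (v $ j) d))\<^sup>2 \<le> (norm v)\<^sup>2 + CARD('n) * d\<^sup>2"
proof -
  have "(max (v $ j) d)\<^sup>2 \<le> (v $ j)\<^sup>2 + d\<^sup>2" for j
    using assms by (cases "v $ j \<le> d") (auto simp: max_def)
  then have "(\<Sum>j\<in>UNIV. (max (v $ j) d)\<^sup>2) \<le> (\<Sum>j\<in>UNIV. (v $ j)\<^sup>2 + d\<^sup>2)"
    by (rule sum_mono)
  then show ?thesis
    by (simp add: norm_vec_def L2_set_def sum.distrib sum_nonneg)
qed

lemma L2fun_trunc_below:
  fixes z :: "real \<Rightarrow> real^'n"
  assumes "L2fun t0 tE z" "0 \<le> d"
  shows "L2fun t0 tE (trunc_below d z)"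
proof -
  let ?M = "lebesgue_on (Om t0 tE)"
  interpret finite_measure ?M by (rule finite_measure_Om)
  have z_meas: "z \<in> borel_measurable ?M" and z_sq: "integrable ?M (\<lambda>t. (norm (z t))\<^sup>2)"
    using assms(1) by (simp_all add: L2fun_def)
  have "continuous_on UNIV (\<lambda>v::real^'n. \<chi> j. max (v $ j) d)"
    by (intro continuous_intros)
  then have meas: "trunc_below d z \<in> borel_measurable ?M"
    unfolding trunc_below_def by (rule measurable_compose[OF z_meas borel_measurable_continuous_onI])
  have "integrable ?M (\<lambda>t. (norm (z t))\<^sup>2 + CARD('n) * d\<^sup>2)"
    using z_sq by simp
  then have "integrable ?M (\<lambda>t. (norm (trunc_below d z t))\<^sup>2)"
  proof (rule Bochner_Integration.integrable_bound)
    show "(\<lambda>t. (norm (trunc_below d z t))\<^sup>2) \<in> borel_measurable ?M"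
      using meas by measurable
    have "norm ((norm (trunc_below d z t))\<^sup>2) \<le> norm ((norm (z t))\<^sup>2 + CARD('n) * d\<^sup>2)" for t
      using norm_sq_vec_max_le[OF assms(2), of "z t"] by (simp add: trunc_below_def)
    then show "AE t in ?M. norm ((norm (trunc_below d z t))\<^sup>2) \<le> norm ((norm (z t))\<^sup>2 + CARD('n) * d\<^sup>2)"
      by simp
  qed
  with meas show ?thesis unfolding L2fun_def by blast
qed

lemma integrable_shortfall_component:
  fixes z :: "real \<Rightarrow> real^'n"
  assumes "L2fun t0 tE z"
  shows "integrable (lebesgue_on (Om t0 tE)) (\<lambda>t. max 0 (d - z t $ j))"
proof -
  interpret finite_measure "lebesgue_on (Om t0 tE)" by (rule finite_measure_Om)
  show ?thesis
    using L2fun_component_integrable[OF assms] by (intro integrable_max integrable_diff) simp_all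
qed

lemma integrable_ln_trunc_below:
  fixes z :: "real \<Rightarrow> real^'n"
  assumes "L2fun t0 tE z" "0 < d"
  shows "integrable (lebesgue_on (Om t0 tE)) (\<lambda>t. ln (trunc_below d z t $ j))"
proof -
  let ?M = "lebesgue_on (Om t0 tE)"
  interpret finite_measure ?M by (rule finite_measure_Om)
  have "integrable ?M (\<lambda>t. \<bar>ln d\<bar> + d + \<bar>z t $ j\<bar>)"
    using L2fun_component_integrable[OF assms(1)] by simp
  then show ?thesis
  proof (rule Bochner_Integration.integrable_bound)
    show "(\<lambda>t. ln (trunc_below d z t $ j)) \<in> borel_measurable ?M"
      using L2fun_component_measurable[OF assms(1)] by (simp add: trunc_below_def)
    have "norm (ln (trunc_below d z t $ j)) \<le> norm (\<bar>ln d\<bar> + d + \<bar>z t $ j\<bar>)" for t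
    proof -
      define m where "m = max (z t $ j) d"
      have "ln d \<le> ln m" "ln m \<le> m" "m \<le> d + \<bar>z t $ j\<bar>"
        using assms(2) by (auto simp: m_def intro: ln_bound)
      then show ?thesis
        using abs_ge_minus_self[of "ln d"] abs_ge_self[of "ln d"] abs_ge_zero[of "z t $ j"] assms(2)
        by (simp add: trunc_below_def abs_le_iff flip: m_def)
    qed
    then show "AE t in ?M. norm (ln (trunc_below d z t $ j)) \<le> norm (\<bar>ln d\<bar> + d + \<bar>z t $ j\<bar>)"
      by simp
  qed
qed

lemma L1norm_diff_trunc_below:
  fixes z :: "real \<Rightarrow> real^'n"
  assumes "L2fun t0 tE z"
  shows "L1norm t0 tE (\<lambda>t. z t - trunc_below d z t)
    = (\<Sum>j\<in>UNIV. \<integral>t. max 0 (d - z t $ j) \<partial>lebesgue_on (Om t0 tE))"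
proof -
  have "\<bar>z t $ j - max (z t $ j) d\<bar> = max 0 (d - z t $ j)" for t j
    by (simp add: max_def)
  then have "L1norm t0 tE (\<lambda>t. z t - trunc_below d z t)
      = (\<integral>t. (\<Sum>j\<in>UNIV. max 0 (d - z t $ j)) \<partial>lebesgue_on (Om t0 tE))"
    unfolding L1norm_def norm1_def trunc_below_def by simp
  also have "\<dots> = (\<Sum>j\<in>UNIV. \<integral>t. max 0 (d - z t $ j) \<partial>lebesgue_on (Om t0 tE))"
    using integrable_shortfall_component[OF assms] by (simp add: Bochner_Integration.integral_sum)
  finally show ?thesis .
qed

lemma Fwt_minimizer_Gamma_finite:
  fixes ystar :: "real \<Rightarrow> real^'ny" and zstar :: "real \<Rightarrow> real^'nz"
  assumes "0 < \<tau>" "(ystar, zstar) \<in> Xspace t0 tE"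
    and "\<forall>y z. (y, z) \<in> Xspace t0 tE \<longrightarrow>
        Fwt f c b ts t0 tE \<omega> \<tau> ystar zstar \<le> Fwt f c b ts t0 tE \<omega> \<tau> y z"
  shows "Gamma t0 tE zstar \<noteq> \<infinity>"
proof
  define one where "one = (\<lambda>t::real. 1 :: real^'nz)"
  have "(ystar, one) \<in> Xspace t0 tE"
    using assms(2) finite_measure.integrable_const[OF finite_measure_Om]
    by (simp add: Xspace_def L2fun_def one_def)
  moreover have "Fwt f c b ts t0 tE \<omega> \<tau> ystar one < \<infinity>"
    by (simp add: Fwt_def Gamma_def one_def neglog_def poslog_def)
  ultimately have "Fwt f c b ts t0 tE \<omega> \<tau> ystar zstar < \<infinity>"
    using assms(3) le_less_trans by blast
  moreover assume "Gamma t0 tE zstar = \<infinity>"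
  ultimately show False
    using assms(1) by (simp add: Fwt_def)
qed

lemma znonneg_if_AE_pos:
  fixes z :: "real \<Rightarrow> real^'n"
  assumes "\<And>j. AE t in lebesgue_on (Om t0 tE). 0 < z t $ j"
  shows "znonneg t0 tE z"
  unfolding znonneg_def AE_all_countable
proof
  show "AE t in lebesgue_on (Om t0 tE). 0 \<le> z t $ j" for j
    using assms[of j] by eventually_elim simp
qed

lemma Fwt_minimizer_ln_gain_le:
  fixes f :: "real^'ny \<Rightarrow> real^'ny \<Rightarrow> real^'nz \<Rightarrow> real \<Rightarrow> real"
    and c :: "real^'ny \<Rightarrow> real^'ny \<Rightarrow> real^'nz \<Rightarrow> real \<Rightarrow> real^'nc"
    and b :: "real^'ny^'m \<Rightarrow> real^'nb"
    and ystar :: "real \<Rightarrow> real^'ny" and zstar z :: "real \<Rightarrow> real^'nz"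
  assumes "0 < \<omega>"
    and F_lipL1: "\<forall>y z1 z2. (y, z1) \<in> Xspace t0 tE \<longrightarrow> (y, z2) \<in> Xspace t0 tE \<longrightarrow>
        znonneg t0 tE z1 \<longrightarrow> znonneg t0 tE z2 \<longrightarrow>
        \<bar>Fobj f t0 tE y z1 - Fobj f t0 tE y z2\<bar> \<le> LF * L1norm t0 tE (\<lambda>t. z1 t - z2 t)"
    and r_lipL1: "\<forall>y z1 z2. (y, z1) \<in> Xspace t0 tE \<longrightarrow> (y, z2) \<in> Xspace t0 tE \<longrightarrow>
        znonneg t0 tE z1 \<longrightarrow> znonneg t0 tE z2 \<longrightarrow>
        \<bar>robj c b ts t0 tE y z1 - robj c b ts t0 tE y z2\<bar> \<le> Lr * L1norm t0 tE (\<lambda>t. z1 t - z2 t)"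
    and xstar_in: "(ystar, zstar) \<in> Xspace t0 tE"
    and xstar_min: "\<forall>y z. (y, z) \<in> Xspace t0 tE \<longrightarrow>
        Fwt f c b ts t0 tE \<omega> \<tau> ystar zstar \<le> Fwt f c b ts t0 tE \<omega> \<tau> y z"
    and x_in: "(ystar, z) \<in> Xspace t0 tE"
    and pos_star: "\<And>j. AE t in lebesgue_on (Om t0 tE). 0 < zstar t $ j"
    and ln_star: "\<And>j. integrable (lebesgue_on (Om t0 tE)) (\<lambda>t. ln (zstar t $ j))"
    and pos: "\<And>j. AE t in lebesgue_on (Om t0 tE). 0 < z t $ j"
    and ln: "\<And>j. integrable (lebesgue_on (Om t0 tE)) (\<lambda>t. ln (z t $ j))"
  shows "\<tau> * ((\<Sum>j\<in>UNIV. \<integral>t. ln (z t $ j) \<partial>lebesgue_on (Om t0 tE))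
                - (\<Sum>j\<in>UNIV. \<integral>t. ln (zstar t $ j) \<partial>lebesgue_on (Om t0 tE)))
    \<le> (LF + Lr / (2 * \<omega>)) * L1norm t0 tE (\<lambda>t. zstar t - z t)"
    (is "\<tau> * (?S z - ?S zstar) \<le> _")
proof -
  define D where "D = L1norm t0 tE (\<lambda>t. zstar t - z t)"
  note nonneg = znonneg_if_AE_pos[OF pos_star] znonneg_if_AE_pos[OF pos]
  have "Fwt f c b ts t0 tE \<omega> \<tau> ystar zstar \<le> Fwt f c b ts t0 tE \<omega> \<tau> ystar z"
    using xstar_min x_in by blast
  then have "Fobj f t0 tE ystar zstar + robj c b ts t0 tE ystar zstar / (2 * \<omega>) - \<tau> * ?S zstar
      \<le> Fobj f t0 tE ystar z + robj c b ts t0 tE ystar z / (2 * \<omega>) - \<tau> * ?S z"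
    unfolding Fwt_def Gamma_eq_sum_integral_ln[OF pos_star ln_star] Gamma_eq_sum_integral_ln[OF pos ln]
    by simp
  moreover have "\<bar>Fobj f t0 tE ystar zstar - Fobj f t0 tE ystar z\<bar> \<le> LF * D"
    using F_lipL1 xstar_in x_in nonneg by (simp add: D_def)
  moreover have "(robj c b ts t0 tE ystar z - robj c b ts t0 tE ystar zstar) / (2 * \<omega>) \<le> Lr * D / (2 * \<omega>)"
  proof -
    have "\<bar>robj c b ts t0 tE ystar zstar - robj c b ts t0 tE ystar z\<bar> \<le> Lr * D"
      using r_lipL1 xstar_in x_in nonneg by (simp add: D_def)
    then show ?thesis
      using \<open>0 < \<omega>\<close> by (intro divide_right_mono) auto
  qed
  ultimately show ?thesis
    unfolding D_def by (simp add: algebra_simps add_divide_distrib diff_divide_distrib)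
qed

lemma sum_integral_ln_max_gap_eq:
  fixes z :: "real \<Rightarrow> real^'n"
  assumes "L2fun t0 tE z" "0 < d" "\<And>j. integrable (lebesgue_on (Om t0 tE)) (\<lambda>t. ln (z t $ j))"
  shows "(\<Sum>j\<in>UNIV. \<integral>t. ln (max (z t $ j) d) - ln (z t $ j) - max 0 (d - z t $ j) / d \<partial>lebesgue_on (Om t0 tE))
    = (\<Sum>j\<in>UNIV. \<integral>t. ln (trunc_below d z t $ j) \<partial>lebesgue_on (Om t0 tE))
      - (\<Sum>j\<in>UNIV. \<integral>t. ln (z t $ j) \<partial>lebesgue_on (Om t0 tE))
      - L1norm t0 tE (\<lambda>t. z t - trunc_below d z t) / d"
  using integrable_ln_trunc_below[OF assms(1,2)] assms(3) integrable_shortfall_component[OF assms(1)]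
  unfolding L1norm_diff_trunc_below[OF assms(1)]
  by (simp add: trunc_below_def sum_subtractf sum_divide_distrib)

lemma Fwt_minimizer_ge_barrier_ratio:
  fixes f :: "real^'ny \<Rightarrow> real^'ny \<Rightarrow> real^'nz \<Rightarrow> real \<Rightarrow> real"
    and c :: "real^'ny \<Rightarrow> real^'ny \<Rightarrow> real^'nz \<Rightarrow> real \<Rightarrow> real^'nc"
    and b :: "real^'ny^'m \<Rightarrow> real^'nb"
    and ystar :: "real \<Rightarrow> real^'ny" and zstar :: "real \<Rightarrow> real^'nz"
  assumes "0 < \<omega>" "0 < \<tau>" "0 < LF + Lr / (2 * \<omega>)"
    and F_lipL1: "\<forall>y z1 z2. (y, z1) \<in> Xspace t0 tE \<longrightarrow> (y, z2) \<in> Xspace t0 tE \<longrightarrow>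
        znonneg t0 tE z1 \<longrightarrow> znonneg t0 tE z2 \<longrightarrow>
        \<bar>Fobj f t0 tE y z1 - Fobj f t0 tE y z2\<bar> \<le> LF * L1norm t0 tE (\<lambda>t. z1 t - z2 t)"
    and r_lipL1: "\<forall>y z1 z2. (y, z1) \<in> Xspace t0 tE \<longrightarrow> (y, z2) \<in> Xspace t0 tE \<longrightarrow>
        znonneg t0 tE z1 \<longrightarrow> znonneg t0 tE z2 \<longrightarrow>
        \<bar>robj c b ts t0 tE y z1 - robj c b ts t0 tE y z2\<bar> \<le> Lr * L1norm t0 tE (\<lambda>t. z1 t - z2 t)"
    and xstar_in: "(ystar, zstar) \<in> Xspace t0 tE"
    and xstar_min: "\<forall>y z. (y, z) \<in> Xspace t0 tE \<longrightarrow>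
        Fwt f c b ts t0 tE \<omega> \<tau> ystar zstar \<le> Fwt f c b ts t0 tE \<omega> \<tau> y z"
  shows "AE t in lebesgue_on (Om t0 tE). \<forall>j. \<tau> / (LF + Lr / (2 * \<omega>)) \<le> zstar t $ j"
proof -
  let ?M = "lebesgue_on (Om t0 tE)"
  define L where "L = LF + Lr / (2 * \<omega>)"
  define d where "d = \<tau> / L"
  have "0 < L" "0 < d" using assms(2,3) by (simp_all add: L_def d_def)
  have zL2: "L2fun t0 tE zstar" and "H1fun t0 tE ystar"
    using xstar_in by (simp_all add: Xspace_def)
  note Gamma_fin = Fwt_minimizer_Gamma_finite[OF assms(2) xstar_in xstar_min]
  note pos = Gamma_finite_imp_ln_integrable(1)[OF zL2 Gamma_fin]
    and ln = Gamma_finite_imp_ln_integrable(2)[OF zL2 Gamma_fin]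
  have "(ystar, trunc_below d zstar) \<in> Xspace t0 tE"
    using \<open>H1fun t0 tE ystar\<close> L2fun_trunc_below[OF zL2] \<open>0 < d\<close> by (simp add: Xspace_def)
  moreover have "AE t in ?M. 0 < trunc_below d zstar t $ j" for j
    using \<open>0 < d\<close> by (simp add: trunc_below_def)
  ultimately have "\<tau> * ((\<Sum>j\<in>UNIV. \<integral>t. ln (trunc_below d zstar t $ j) \<partial>?M) - (\<Sum>j\<in>UNIV. \<integral>t. ln (zstar t $ j) \<partial>?M))
      \<le> L * L1norm t0 tE (\<lambda>t. zstar t - trunc_below d zstar t)"
    unfolding L_def
    by (intro Fwt_minimizer_ln_gain_le[OF assms(1) F_lipL1 r_lipL1 xstar_in xstar_min _ pos ln]
        integrable_ln_trunc_below[OF zL2 \<open>0 < d\<close>])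
  then have "(\<Sum>j\<in>UNIV. \<integral>t. ln (max (zstar t $ j) d) - ln (zstar t $ j) - max 0 (d - zstar t $ j) / d \<partial>?M) \<le> 0"
    unfolding sum_integral_ln_max_gap_eq[OF zL2 \<open>0 < d\<close> ln] L1norm_diff_trunc_below[OF zL2]
    using assms(2) \<open>0 < L\<close> by (simp add: d_def field_simps)
  then have "AE t in ?M. d \<le> zstar t $ j" for j
    using AE_ge_of_ln_max_gap_integral_le_0[of UNIV d j "\<lambda>j t. zstar t $ j" ?M] pos ln \<open>0 < d\<close>
      integrable_ln_trunc_below[OF zL2 \<open>0 < d\<close>] integrable_shortfall_component[OF zL2]
    by (simp add: trunc_below_def)
  then show ?thesis
    by (simp add: AE_all_countable d_def L_def)
qed

theorem mainTheorem14:
  fixes f :: "real^'ny \<Rightarrow> real^'ny \<Rightarrow> real^'nz \<Rightarrow> real \<Rightarrow> real"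
    and c :: "real^'ny \<Rightarrow> real^'ny \<Rightarrow> real^'nz \<Rightarrow> real \<Rightarrow> real^'nc"
    and b :: "real^'ny^'m \<Rightarrow> real^'nb"
    and ts :: "'m \<Rightarrow> real"
    and t0 tE \<omega> \<tau> LF Lr Lf Lc cmax :: real
    and ystar :: "real \<Rightarrow> real^'ny" and zstar :: "real \<Rightarrow> real^'nz"
  assumes interval: "t0 < tE"
    and ts_in: "\<forall>k. ts k \<in> {t0..tE}"
    and omega: "0 < \<omega>" "\<omega> < 1"
    and tau: "0 < \<tau>" "\<tau> \<le> \<omega>"
    \<comment> \<open>(A.2)\<close>
    and c_bound: "\<forall>a v w t. t \<in> Om t0 tE \<longrightarrow> (\<forall>j. 0 \<le> w $ j) \<longrightarrow> norm1 (c a v w t) \<le> cmax"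
    and b_bound: "\<exists>B. \<forall>p. norm1 (b p) \<le> B"
    and F_below: "\<exists>m. \<forall>y z. (y, z) \<in> Xspace t0 tE \<longrightarrow> znonneg t0 tE z \<longrightarrow> m \<le> Fobj f t0 tE y z"
    \<comment> \<open>(A.3)\<close>
    and f_lip: "\<forall>t. Lf-lipschitz_on UNIV (\<lambda>(a, v, w). f a v w t)"
    and c_lip: "\<forall>t. Lc-lipschitz_on UNIV (\<lambda>(a, v, w). c a v w t)"
    and b_lip: "\<exists>Lb. Lb-lipschitz_on UNIV b"
    \<comment> \<open>L_F, L_r bound the Lipschitz constants of F, r\<close>
    and LF_ge: "2 \<le> LF" and Lr_ge: "2 \<le> Lr"
    and F_lipX: "\<forall>y1 z1 y2 z2. (y1, z1) \<in> Xspace t0 tE \<longrightarrow> (y2, z2) \<in> Xspace t0 tE \<longrightarrow>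
        znonneg t0 tE z1 \<longrightarrow> znonneg t0 tE z2 \<longrightarrow>
        \<bar>Fobj f t0 tE y1 z1 - Fobj f t0 tE y2 z2\<bar>
          \<le> LF * Xnorm t0 tE (\<lambda>t. y1 t - y2 t) (\<lambda>t. z1 t - z2 t)"
    and F_lipL1: "\<forall>y z1 z2. (y, z1) \<in> Xspace t0 tE \<longrightarrow> (y, z2) \<in> Xspace t0 tE \<longrightarrow>
        znonneg t0 tE z1 \<longrightarrow> znonneg t0 tE z2 \<longrightarrow>
        \<bar>Fobj f t0 tE y z1 - Fobj f t0 tE y z2\<bar> \<le> LF * L1norm t0 tE (\<lambda>t. z1 t - z2 t)"
    and r_lipX: "\<forall>y1 z1 y2 z2. (y1, z1) \<in> Xspace t0 tE \<longrightarrow> (y2, z2) \<in> Xspace t0 tE \<longrightarrow>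
        znonneg t0 tE z1 \<longrightarrow> znonneg t0 tE z2 \<longrightarrow>
        \<bar>robj c b ts t0 tE y1 z1 - robj c b ts t0 tE y2 z2\<bar>
          \<le> Lr * Xnorm t0 tE (\<lambda>t. y1 t - y2 t) (\<lambda>t. z1 t - z2 t)"
    and r_lipL1: "\<forall>y z1 z2. (y, z1) \<in> Xspace t0 tE \<longrightarrow> (y, z2) \<in> Xspace t0 tE \<longrightarrow>
        znonneg t0 tE z1 \<longrightarrow> znonneg t0 tE z2 \<longrightarrow>
        \<bar>robj c b ts t0 tE y z1 - robj c b ts t0 tE y z2\<bar> \<le> Lr * L1norm t0 tE (\<lambda>t. z1 t - z2 t)"
    \<comment> \<open>x* is a minimizer of F_{omega,tau} over X\<close>
    and xstar_in: "(ystar, zstar) \<in> Xspace t0 tE"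
    and xstar_min: "\<forall>y z. (y, z) \<in> Xspace t0 tE \<longrightarrow>
        Fwt f c b ts t0 tE \<omega> \<tau> ystar zstar \<le> Fwt f c b ts t0 tE \<omega> \<tau> y z"
  shows "AE t in lebesgue_on (Om t0 tE).
           \<forall>j. zstar t $ j \<ge> \<tau> / max (LF + Lr / (2 * \<omega>)) (Lf + Lc / (2 * \<omega>) * cmax)"
proof -
  let ?L = "LF + Lr / (2 * \<omega>)"
  let ?L\<omega> = "max (LF + Lr / (2 * \<omega>)) (Lf + Lc / (2 * \<omega>) * cmax)"
  have "0 < ?L" using LF_ge Lr_ge omega by (simp add: add_pos_nonneg)
  have "AE t in lebesgue_on (Om t0 tE). \<forall>j. \<tau> / ?L \<le> zstar t $ j"
    using Fwt_minimizer_ge_barrier_ratio[OF omega(1) tau(1) \<open>0 < ?L\<close> F_lipL1 r_lipL1 xstar_in xstar_min] .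
  moreover have "\<tau> / ?L\<omega> \<le> \<tau> / ?L"
    using \<open>0 < ?L\<close> tau(1) by (intro divide_left_mono) auto
  ultimately show ?thesis
    by (auto elim!: eventually_mono intro: order_trans)
qed

end
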